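(* Let $(D,\prec,\succ,* )$ be an involutive dendriform algebra, let $(F,\diamond,R)$ be the free nonunitary (weight zero) Rota-Baxter algebra $\varpi^{\mathrm{NC},0}(T(D))$ on the vector space $D$, equipped with the involution described below, and let $J_R$ be the Rota-Baxter ideal of $F$ generated by $\{x\prec y-x\diamond R(y),\ x\succ y-R(x)\diamond y\mid x,y\in D\}$. Then $J_R$ is closed under the involution, so the universal enveloping Rota-Baxter algebra $F/J_R$ of $D$ is an involutive Rota-Baxter algebra (with the induced involution).
   Context: A dendriform algebra is a vector space $D$ with bilinear $\prec,\succ$ satisfying $(a\prec b)\prec c=a\prec(b\prec c+b\succ c)$, $(a\succ b)\prec c=a\succ(b\prec c)$, $(a\prec b+a\succ b)\succ c=a\succ(b\succ c)$; it is involutive if equipped with a linear $*$, $a^{**}=a$, $(a\prec b)^*=b^*\succ a^*$. A Rota-Baxter operator on an associative algebra $B$ is a linear $R$ with $R(a)R(b)=R(aR(b)+R(a)b)$; an involutive Rota-Baxter algebra is a Rota-Baxter algebra with an involution $*$ ($a^{**}=a$, $(ab)^*=b^*a^*$) such that $R(a^* )=R(a)^*$. A Rota-Baxter ideal is a two-sided ideal stable under $R$. Construction of $F$ (Ebrahimi-Fard–Guo): $T(D)=\bigoplus_{n\ge1}D^{\otimes n}$ is the nonunitary tensor algebra with involution $(v_1\otimes\cdots\otimes v_n)^*=v_n^*\otimes\cdots\otimes v_1^*$. With $X$ a basis of $B=T(D)$, Rota-Baxter words are built from letters of $X$ and bracketed words $\lfloor\cdot\rfloor$, alternating in their standard decomposition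 $\mathbf x=\mathbf x_1\cdots\mathbf x_b$ between elements of $X$ and bracketed Rota-Baxter words; $F$ is spanned by these words, $R(\mathbf x)=\lfloor\mathbf x\rfloor$, and the product $\diamond$ is concatenation when the last factor of $\mathbf x$ and the first of $\mathbf x'$ are of different types, the product of $B$ on adjacent letters of $X$, and $\lfloor\bar x\rfloor\diamond\lfloor\bar x'\rfloor=\lfloor\lfloor\bar x\rfloor\diamond\bar x'\rfloor+\lfloor\bar x\diamond\lfloor\bar x'\rfloor\rfloor$ on adjacent bracketed factors. $D$ is viewed inside $F$ via $D\subset T(D)\to F$. The involution on $F$ is given on words by the involution of $B$ on letters of $X$, $\lfloor\mathbf x\rfloor^*=\lfloor\mathbf x^*\rfloor$ and $(\mathbf x_1\cdots\mathbf x_b)^*=\mathbf x_b^*\cdots\mathbf x_1^*$; with it $(F,\diamond,R,* )$ is an involutive Rota-Baxter algebra. *)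

theory Defs
  imports Complex_Main
begin

definition bilinear_map ::
  "('k::field \<Rightarrow> 'a::ab_group_add \<Rightarrow> 'a) \<Rightarrow> ('k \<Rightarrow> 'b::ab_group_add \<Rightarrow> 'b) \<Rightarrow>
   ('k \<Rightarrow> 'c::ab_group_add \<Rightarrow> 'c) \<Rightarrow> ('a \<Rightarrow> 'b \<Rightarrow> 'c) \<Rightarrow> bool" where
  "bilinear_map sa sb sc f \<longleftrightarrow>
     (\<forall>y. Vector_Spaces.linear sa sc (\<lambda>x. f x y)) \<and> (\<forall>x. Vector_Spaces.linear sb sc (\<lambda>y. f x y))"

definition dendriform ::
  "('k::field \<Rightarrow> 'd::ab_group_add \<Rightarrow> 'd) \<Rightarrow> ('d \<Rightarrow> 'd \<Rightarrow> 'd) \<Rightarrow> ('d \<Rightarrow> 'd \<Rightarrow> 'd) \<Rightarrow> bool" where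
  "dendriform sc prec succ \<longleftrightarrow>
     vector_space sc \<and> bilinear_map sc sc sc prec \<and> bilinear_map sc sc sc succ \<and>
     (\<forall>a b c. prec (prec a b) c = prec a (prec b c + succ b c)) \<and>
     (\<forall>a b c. prec (succ a b) c = succ a (prec b c)) \<and>
     (\<forall>a b c. succ (prec a b + succ a b) c = succ a (succ b c))"

definition involutive_dendriform ::
  "('k::field \<Rightarrow> 'd::ab_group_add \<Rightarrow> 'd) \<Rightarrow> ('d \<Rightarrow> 'd \<Rightarrow> 'd) \<Rightarrow> ('d \<Rightarrow> 'd \<Rightarrow> 'd)
   \<Rightarrow> ('d \<Rightarrow> 'd) \<Rightarrow> bool" where
  "involutive_dendriform sc prec succ star \<longleftrightarrow>
     dendriform sc prec succ \<and> Vector_Spaces.linear sc sc star \<and>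
     (\<forall>a. star (star a) = a) \<and>
     (\<forall>a b. star (prec a b) = succ (star b) (star a))"

definition assoc_algebra :: "('k::field \<Rightarrow> 'f::ring \<Rightarrow> 'f) \<Rightarrow> bool" where
  "assoc_algebra sc \<longleftrightarrow> vector_space sc \<and>
     (\<forall>c x y. sc c (x * y) = sc c x * y \<and> sc c (x * y) = x * sc c y)"

definition rota_baxter :: "('k::field \<Rightarrow> 'f::ring \<Rightarrow> 'f) \<Rightarrow> ('f \<Rightarrow> 'f) \<Rightarrow> bool" where
  "rota_baxter sc R \<longleftrightarrow> assoc_algebra sc \<and> Vector_Spaces.linear sc sc R \<and>
     (\<forall>a b. R a * R b = R (a * R b + R a * b))"

definition involutive_rota_baxter ::
  "('k::field \<Rightarrow> 'f::ring \<Rightarrow> 'f) \<Rightarrow> ('f \<Rightarrow> 'f) \<Rightarrow> ('f \<Rightarrow> 'f) \<Rightarrow> bool" where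
  "involutive_rota_baxter sc R star \<longleftrightarrow> rota_baxter sc R \<and> Vector_Spaces.linear sc sc star \<and>
     (\<forall>a. star (star a) = a) \<and> (\<forall>a b. star (a * b) = star b * star a) \<and>
     (\<forall>a. R (star a) = star (R a))"

definition rb_ideal :: "('k::field \<Rightarrow> 'f::ring \<Rightarrow> 'f) \<Rightarrow> ('f \<Rightarrow> 'f) \<Rightarrow> 'f set \<Rightarrow> bool" where
  "rb_ideal sc R I \<longleftrightarrow> 0 \<in> I \<and> (\<forall>x\<in>I. \<forall>y\<in>I. x + y \<in> I) \<and> (\<forall>c. \<forall>x\<in>I. sc c x \<in> I) \<and>
     (\<forall>x\<in>I. \<forall>a. a * x \<in> I \<and> x * a \<in> I) \<and> (\<forall>x\<in>I. R x \<in> I)"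

definition rb_ideal_gen :: "('k::field \<Rightarrow> 'f::ring \<Rightarrow> 'f) \<Rightarrow> ('f \<Rightarrow> 'f) \<Rightarrow> 'f set \<Rightarrow> 'f set" where
  "rb_ideal_gen sc R S = \<Inter>{I. rb_ideal sc R I \<and> S \<subseteq> I}"

end

theory Submission
  imports Defs
begin

(* The preimage of a Rota-Baxter ideal under an involution of F is again a Rota-Baxter ideal,
   because the involution is linear, reverses products and commutes with R. The involution
   maps each generator j(x < y) - j(x) R(j(y)) of J to the generator
   j(y' > x') - R(j(y')) j(x'), where x' and y' are the involutes of x and y, and vice versa,
   so the preimage of J contains the generators, hence contains J by minimality. *)

lemma rb_ideal_rb_ideal_gen: "rb_ideal sc R (rb_ideal_gen sc R S)"
  unfolding rb_ideal_gen_def rb_ideal_def by blast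

lemma rb_ideal_gen_superset: "S \<subseteq> rb_ideal_gen sc R S"
  unfolding rb_ideal_gen_def by blast

lemma rb_ideal_gen_minimal: "rb_ideal sc R I \<Longrightarrow> S \<subseteq> I \<Longrightarrow> rb_ideal_gen sc R S \<subseteq> I"
  unfolding rb_ideal_gen_def by blast

lemma involutive_rota_baxter_star_module_hom:
  "involutive_rota_baxter sc R star \<Longrightarrow> module_hom sc sc star"
  by (simp add: involutive_rota_baxter_def linear_iff_module_hom)

lemma rb_ideal_vimage_involution:
  assumes F: "involutive_rota_baxter sc R star" and J: "rb_ideal sc R J"
  shows "rb_ideal sc R (star -` J)"
proof -
  interpret module_hom sc sc star
    using involutive_rota_baxter_star_module_hom[OF F] .
  have "\<And>a b. star (a * b) = star b * star a" and "\<And>a. star (R a) = R (star a)"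
    using F unfolding involutive_rota_baxter_def by auto
  then show ?thesis
    using J unfolding rb_ideal_def by (auto simp: zero add scale)
qed

lemma rb_ideal_gen_involution_closed:
  assumes F: "involutive_rota_baxter sc R star" and "star ` S \<subseteq> S"
    and "x \<in> rb_ideal_gen sc R S"
  shows "star x \<in> rb_ideal_gen sc R S"
proof -
  have "S \<subseteq> star -` rb_ideal_gen sc R S"
    using \<open>star ` S \<subseteq> S\<close> rb_ideal_gen_superset by blast
  then have "rb_ideal_gen sc R S \<subseteq> star -` rb_ideal_gen sc R S"
    by (intro rb_ideal_gen_minimal rb_ideal_vimage_involution[OF F] rb_ideal_rb_ideal_gen)
  then show ?thesis
    using \<open>x \<in> rb_ideal_gen sc R S\<close> by blast
qed

lemma involutive_dendriform_star_succ:
  assumes "involutive_dendriform sc prec succ star"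
  shows "star (succ a b) = prec (star b) (star a)"
proof -
  have star_star: "\<And>a. star (star a) = a"
    and star_prec: "\<And>a b. star (prec a b) = succ (star b) (star a)"
    using assms unfolding involutive_dendriform_def by auto
  have "star (succ a b) = star (star (prec (star b) (star a)))"
    by (simp add: star_prec star_star)
  then show ?thesis
    by (simp add: star_star)
qed

lemma involution_swaps_envelope_relations:
  assumes D: "involutive_dendriform scD prec succ starD"
    and F: "involutive_rota_baxter scF R starF"
    and j_star: "\<And>a. j (starD a) = starF (j a)"
  shows "starF (j (prec x y) - j x * R (j y)) = j (succ (starD y) (starD x)) - R (j (starD y)) * j (starD x)"
    and "starF (j (succ x y) - R (j x) * j y) = j (prec (starD y) (starD x)) - j (starD y) * R (j (starD x))"
proof -
  interpret module_hom scF scF starF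
    using involutive_rota_baxter_star_module_hom[OF F] .
  have star_mult: "\<And>a b. starF (a * b) = starF b * starF a"
    and R_star: "\<And>a. R (starF a) = starF (R a)"
    using F unfolding involutive_rota_baxter_def by auto
  have "starD (prec x y) = succ (starD y) (starD x)"
    using D unfolding involutive_dendriform_def by auto
  then show "starF (j (prec x y) - j x * R (j y)) = j (succ (starD y) (starD x)) - R (j (starD y)) * j (starD x)"
    by (metis diff star_mult R_star j_star)
  show "starF (j (succ x y) - R (j x) * j y) = j (prec (starD y) (starD x)) - j (starD y) * R (j (starD x))"
    by (metis diff star_mult R_star j_star involutive_dendriform_star_succ[OF D])
qed

theorem mainTheorem9:
  fixes scD :: "'k::field \<Rightarrow> 'd::ab_group_add \<Rightarrow> 'd"
    and prec succ :: "'d \<Rightarrow> 'd \<Rightarrow> 'd"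
    and starD :: "'d \<Rightarrow> 'd"
    and scF :: "'k \<Rightarrow> 'f::ring \<Rightarrow> 'f"
    and R starF :: "'f \<Rightarrow> 'f"
    and j :: "'d \<Rightarrow> 'f"
  assumes D: "involutive_dendriform scD prec succ starD"
    and F: "involutive_rota_baxter scF R starF"
    and j_lin: "Vector_Spaces.linear scD scF j"
    and j_star: "\<forall>a. j (starD a) = starF (j a)"
  defines "J \<equiv> rb_ideal_gen scF R
             ({j (prec x y) - j x * R (j y) | x y. True} \<union>
              {j (succ x y) - R (j x) * j y | x y. True})"
  shows "(\<forall>x\<in>J. starF x \<in> J) \<and> (\<forall>x y. x - y \<in> J \<longrightarrow> starF x - starF y \<in> J)"
proof -
  define S where "S = {j (prec x y) - j x * R (j y) | x y. True} \<union>
                      {j (succ x y) - R (j x) * j y | x y. True}"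
  have "starF ` S \<subseteq> S"
    unfolding S_def using involution_swaps_envelope_relations[OF D F] j_star by blast
  then have J_closed: "\<forall>x\<in>J. starF x \<in> J"
    unfolding J_def S_def[symmetric] using rb_ideal_gen_involution_closed[OF F] by blast
  have "starF (x - y) = starF x - starF y" for x y
    using module_hom.diff[OF involutive_rota_baxter_star_module_hom[OF F]] .
  with J_closed show ?thesis
    by metis
qed

end
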